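(* Let $t,d \ge 1$ and let $m$ be an integer with $1 \le m \le n/d$. Let $\mathcal{G}'_{t,d}$ be the class of partially colored graphs obtained by taking a graph $G \in \mathcal{G}_{t,d}$, choosing a set of $dm$ of its $n$ vertices, and coloring these $dm$ vertices bijectively with the colors $\{1,\ldots,dm\}$ (the remaining vertices uncolored), with graphs considered up to color-preserving isomorphism. Then $$\log |\mathcal{G}'_{t,d}| \le \log |\mathcal{G}_{t,d}| + n \log n - (n-md)\log(n-md) - dm + O(\log n).$$
   Context: All logarithms are base 2. A graph $G$ on $n$ vertices has a $d$-dimensional $t$-representation if each vertex can be assigned a set of at most $t$ pairwise disjoint $d$-dimensional axis-parallel boxes (products of $d$ closed real intervals) such that distinct vertices are adjacent iff some box of one intersects some box of the other. $\mathcal{G}_{t,d}$ is the class of unlabeled $n$-vertex graphs having such a representation. *)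

theory Defs
  imports Main "HOL-Library.Log_Nat" Complex_Main
begin

text \<open>A d-dimensional axis-parallel box is given by its lower and upper corner
  (only coordinates i < d matter); it is the product of the closed intervals
  [lo i, hi i], which are required to be nonempty (lo i \<le> hi i).\<close>

type_synonym box = "(nat \<Rightarrow> real) \<times> (nat \<Rightarrow> real)"

definition valid_box :: "nat \<Rightarrow> box \<Rightarrow> bool" where
  "valid_box d b \<longleftrightarrow> (\<forall>i<d. fst b i \<le> snd b i)"

definition box_set :: "nat \<Rightarrow> box \<Rightarrow> (nat \<Rightarrow> real) set" where
  "box_set d b = {x. \<forall>i<d. fst b i \<le> x i \<and> x i \<le> snd b i}"

definition simple_graph :: "nat \<Rightarrow> (nat \<times> nat) set \<Rightarrow> bool" where
  "simple_graph n E \<longleftrightarrow> E \<subseteq> {0..<n} \<times> {0..<n} \<and>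
     (\<forall>(a, b) \<in> E. a \<noteq> b \<and> (b, a) \<in> E)"

definition has_box_rep :: "nat \<Rightarrow> nat \<Rightarrow> nat \<Rightarrow> (nat \<times> nat) set \<Rightarrow> bool" where
  "has_box_rep t d n E \<longleftrightarrow>
     (\<exists>R :: nat \<Rightarrow> box set.
        (\<forall>v<n. finite (R v) \<and> card (R v) \<le> t
               \<and> (\<forall>b\<in>R v. valid_box d b)
               \<and> (\<forall>b\<in>R v. \<forall>b'\<in>R v. b \<noteq> b' \<longrightarrow> box_set d b \<inter> box_set d b' = {}))
      \<and> (\<forall>u<n. \<forall>v<n. u \<noteq> v \<longrightarrow>
            ((u, v) \<in> E \<longleftrightarrow> (\<exists>b\<in>R u. \<exists>b'\<in>R v. box_set d b \<inter> box_set d b' \<noteq> {}))))"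

definition labeled_class :: "nat \<Rightarrow> nat \<Rightarrow> nat \<Rightarrow> (nat \<times> nat) set set" where
  "labeled_class t d n = {E. simple_graph n E \<and> has_box_rep t d n E}"

definition graph_iso :: "nat \<Rightarrow> (nat \<times> nat) set \<Rightarrow> (nat \<times> nat) set \<Rightarrow> bool" where
  "graph_iso n E E' \<longleftrightarrow>
     (\<exists>\<pi>. bij_betw \<pi> {0..<n} {0..<n} \<and> E' = (\<lambda>(a, b). (\<pi> a, \<pi> b)) ` E)"

definition num_classes :: "('a \<Rightarrow> 'a \<Rightarrow> bool) \<Rightarrow> 'a set \<Rightarrow> nat" where
  "num_classes R A = card {{y \<in> A. R x y} | x. x \<in> A}"

definition G_count :: "nat \<Rightarrow> nat \<Rightarrow> nat \<Rightarrow> nat" where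
  "G_count t d n = num_classes (graph_iso n) (labeled_class t d n)"

definition partial_coloring :: "nat \<Rightarrow> nat \<Rightarrow> (nat \<Rightarrow> nat option) \<Rightarrow> bool" where
  "partial_coloring n k c \<longleftrightarrow> dom c \<subseteq> {0..<n} \<and> inj_on c (dom c) \<and> ran c = {1..k}"

definition colored_class ::
  "nat \<Rightarrow> nat \<Rightarrow> nat \<Rightarrow> nat \<Rightarrow> ((nat \<times> nat) set \<times> (nat \<Rightarrow> nat option)) set" where
  "colored_class t d n k = {(E, c). E \<in> labeled_class t d n \<and> partial_coloring n k c}"

definition colored_iso :: "nat \<Rightarrow> ((nat \<times> nat) set \<times> (nat \<Rightarrow> nat option))
     \<Rightarrow> ((nat \<times> nat) set \<times> (nat \<Rightarrow> nat option)) \<Rightarrow> bool" where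
  "colored_iso n G G' \<longleftrightarrow>
     (\<exists>\<pi>. bij_betw \<pi> {0..<n} {0..<n}
          \<and> fst G' = (\<lambda>(a, b). (\<pi> a, \<pi> b)) ` fst G
          \<and> (\<forall>v\<in>{0..<n}. snd G' (\<pi> v) = snd G v))"

definition G'_count :: "nat \<Rightarrow> nat \<Rightarrow> nat \<Rightarrow> nat \<Rightarrow> nat" where
  "G'_count t d n k = num_classes (colored_iso n) (colored_class t d n k)"

end

theory Submission
  imports Defs
begin

text \<open>A partially colored graph is determined, up to color-preserving isomorphism, by the
  isomorphism class of its underlying graph together with a coloring of one fixed representative
  of that class. A coloring with k = dm colors is an injective placement of the colors, so
  |G'| \<le> |G| \<cdot> n!/(n-k)!. Comparing ln j with the increments of x ln x - x + ln x gives
  ln (n!/(n-k)!) \<le> n ln n - (n-k) ln (n-k) - k + ln n + 1, and the claim follows with C = 3.\<close>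

definition colored_vertices :: "nat \<Rightarrow> (nat \<Rightarrow> nat option) \<Rightarrow> nat list" where
  "colored_vertices k c = map (\<lambda>j. THE v. c v = Some j) [1..<Suc k]"

lemma partial_coloring_Some_less:
  "partial_coloring n k c \<Longrightarrow> c v = Some j \<Longrightarrow> v < n"
  unfolding partial_coloring_def by auto

lemma partial_coloring_Some_iff:
  assumes "partial_coloring n k c"
  shows "c v = Some j \<longleftrightarrow> j \<in> {1..k} \<and> v = (THE u. c u = Some j)"
proof -
  have unique: "u = w" if "c u = Some j" "c w = Some j" for u w
    using assms that unfolding partial_coloring_def inj_on_def by (metis domI)
  show ?thesis
  proof
    assume "c v = Some j"
    then show "j \<in> {1..k} \<and> v = (THE u. c u = Some j)"
      using assms unique unfolding partial_coloring_def ran_def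
      by (auto intro: the_equality[symmetric])
  next
    assume *: "j \<in> {1..k} \<and> v = (THE u. c u = Some j)"
    then have "j \<in> ran c"
      using assms unfolding partial_coloring_def by auto
    then obtain u where "c u = Some j"
      unfolding ran_def by blast
    with * show "c v = Some j"
      using theI[of "\<lambda>u. c u = Some j" u] unique by blast
  qed
qed

lemma colored_vertices_distinct:
  assumes "partial_coloring n k c"
  shows "length (colored_vertices k c) = k \<and> distinct (colored_vertices k c)
    \<and> set (colored_vertices k c) \<subseteq> {0..<n}"
proof -
  have colored: "c (THE u. c u = Some j) = Some j" if "j \<in> {1..k}" for j
    using partial_coloring_Some_iff[OF assms] that by blast
  then have "inj_on (\<lambda>j. THE u. c u = Some j) {1..k}"
    by (intro inj_onI) (metis option.inject)
  moreover have "(THE u. c u = Some j) < n" if "j \<in> {1..k}" for j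
    using partial_coloring_Some_less[OF assms colored[OF that]] .
  ultimately show ?thesis
    unfolding colored_vertices_def
    by (auto simp: distinct_map atLeastLessThanSuc_atLeastAtMost simp del: upt_Suc)
qed

lemma inj_on_colored_vertices: "inj_on (colored_vertices k) {c. partial_coloring n k c}"
proof (rule inj_onI)
  fix c c' assume "c \<in> {c. partial_coloring n k c}" "c' \<in> {c. partial_coloring n k c}"
    and eq: "colored_vertices k c = colored_vertices k c'"
  then have pc: "partial_coloring n k c" and pc': "partial_coloring n k c'" by simp_all
  have "\<forall>j\<in>set [1..<Suc k]. (THE u. c u = Some j) = (THE u. c' u = Some j)"
    using eq unfolding colored_vertices_def map_eq_conv .
  then have same_vertex: "(THE u. c u = Some j) = (THE u. c' u = Some j)" if "j \<in> {1..k}" for j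
    using that by (auto simp del: upt_Suc)
  have "c v = Some j \<longleftrightarrow> c' v = Some j" for v j
  proof -
    have "c v = Some j \<longleftrightarrow> j \<in> {1..k} \<and> v = (THE u. c u = Some j)"
      by (rule partial_coloring_Some_iff[OF pc])
    also have "\<dots> \<longleftrightarrow> j \<in> {1..k} \<and> v = (THE u. c' u = Some j)"
      using same_vertex by auto
    also have "\<dots> \<longleftrightarrow> c' v = Some j"
      by (rule partial_coloring_Some_iff[OF pc', symmetric])
    finally show ?thesis .
  qed
  then show "c = c'"
    by (intro ext) (metis not_None_eq)
qed

lemma finite_partial_colorings: "finite {c. partial_coloring n k c}"
  and card_partial_colorings_le:
    "k \<le> n \<Longrightarrow> card {c. partial_coloring n k c} \<le> \<Prod>{n - k + 1..n}"
proof -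
  let ?L = "{xs. length xs = k \<and> distinct xs \<and> set xs \<subseteq> {0..<n}}"
  have maps_to: "colored_vertices k ` {c. partial_coloring n k c} \<subseteq> ?L"
    using colored_vertices_distinct by blast
  have "finite ?L"
    by (rule finite_subset[of _ "{xs. set xs \<subseteq> {0..<n} \<and> length xs = k}"])
       (auto intro: finite_lists_length_eq)
  then show "finite {c. partial_coloring n k c}"
    using finite_imageD[OF finite_subset[OF maps_to] inj_on_colored_vertices] by blast
  show "card {c. partial_coloring n k c} \<le> \<Prod>{n - k + 1..n}" if "k \<le> n"
    using card_inj_on_le[OF inj_on_colored_vertices maps_to \<open>finite ?L\<close>]
      card_lists_distinct_length_eq[of "{0..<n}" k] that by simp
qed

lemma labeled_class_subset: "E \<in> labeled_class t d n \<Longrightarrow> E \<subseteq> {0..<n} \<times> {0..<n}"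
  unfolding labeled_class_def simple_graph_def by blast

lemma finite_labeled_class: "finite (labeled_class t d n)"
  by (rule finite_subset[of _ "Pow ({0..<n} \<times> {0..<n})"]) (auto dest: labeled_class_subset)

lemma empty_in_labeled_class: "{} \<in> labeled_class t d n"
  unfolding labeled_class_def simple_graph_def has_box_rep_def
  by (auto intro: exI[of _ "\<lambda>_. {}"])

lemma graph_iso_refl: "graph_iso n E E"
  unfolding graph_iso_def by (rule exI[of _ id]) (auto simp: case_prod_unfold)

lemma colored_iso_sym:
  assumes "fst G \<subseteq> {0..<n} \<times> {0..<n}" and "colored_iso n G G'"
  shows "colored_iso n G' G"
proof -
  obtain \<pi> where \<pi>: "bij_betw \<pi> {0..<n} {0..<n}"
    and E': "fst G' = (\<lambda>(a, b). (\<pi> a, \<pi> b)) ` fst G"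
    and c': "\<forall>v\<in>{0..<n}. snd G' (\<pi> v) = snd G v"
    using assms(2) unfolding colored_iso_def by blast
  define \<rho> where "\<rho> = inv_into {0..<n} \<pi>"
  have \<rho>: "bij_betw \<rho> {0..<n} {0..<n}"
    unfolding \<rho>_def by (rule bij_betw_inv_into[OF \<pi>])
  have \<rho>\<pi>: "\<rho> (\<pi> v) = v" if "v \<in> {0..<n}" for v
    unfolding \<rho>_def by (rule bij_betw_inv_into_left[OF \<pi> that])
  have \<pi>\<rho>: "\<pi> (\<rho> w) = w" if "w \<in> {0..<n}" for w
    unfolding \<rho>_def by (rule bij_betw_inv_into_right[OF \<pi> that])
  have "fst G = (\<lambda>(a, b). (\<rho> a, \<rho> b)) ` fst G'"
    unfolding E' image_image using assms(1) \<rho>\<pi> by (force simp: case_prod_unfold)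
  moreover have "\<forall>w\<in>{0..<n}. snd G (\<rho> w) = snd G' w"
    using c' \<pi>\<rho> bij_betw_apply[OF \<rho>] by metis
  ultimately show ?thesis
    unfolding colored_iso_def using \<rho> by blast
qed

lemma colored_iso_trans:
  assumes "colored_iso n G1 G2" and "colored_iso n G2 G3"
  shows "colored_iso n G1 G3"
proof -
  obtain \<pi> where \<pi>: "bij_betw \<pi> {0..<n} {0..<n}"
    and E2: "fst G2 = (\<lambda>(a, b). (\<pi> a, \<pi> b)) ` fst G1"
    and c2: "\<forall>v\<in>{0..<n}. snd G2 (\<pi> v) = snd G1 v"
    using assms(1) unfolding colored_iso_def by blast
  obtain \<sigma> where \<sigma>: "bij_betw \<sigma> {0..<n} {0..<n}"
    and E3: "fst G3 = (\<lambda>(a, b). (\<sigma> a, \<sigma> b)) ` fst G2"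
    and c3: "\<forall>v\<in>{0..<n}. snd G3 (\<sigma> v) = snd G2 v"
    using assms(2) unfolding colored_iso_def by blast
  have "bij_betw (\<sigma> \<circ> \<pi>) {0..<n} {0..<n}"
    using \<pi> \<sigma> by (rule bij_betw_trans)
  moreover have "fst G3 = (\<lambda>(a, b). ((\<sigma> \<circ> \<pi>) a, (\<sigma> \<circ> \<pi>) b)) ` fst G1"
    unfolding E3 E2 image_image by (rule image_cong) auto
  moreover have "\<forall>v\<in>{0..<n}. snd G3 ((\<sigma> \<circ> \<pi>) v) = snd G1 v"
    using c2 c3 bij_betw_apply[OF \<pi>] by simp
  ultimately show ?thesis
    unfolding colored_iso_def by blast
qed

lemma colored_iso_of_graph_iso:
  assumes c: "partial_coloring n k c" and "graph_iso n E E'"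
  obtains c' where "partial_coloring n k c'" and "colored_iso n (E, c) (E', c')"
proof -
  obtain \<pi> where \<pi>: "bij_betw \<pi> {0..<n} {0..<n}" and E': "E' = (\<lambda>(a, b). (\<pi> a, \<pi> b)) ` E"
    using assms(2) unfolding graph_iso_def by blast
  define \<rho> where "\<rho> = inv_into {0..<n} \<pi>"
  have \<rho>\<pi>: "\<rho> (\<pi> v) = v" if "v \<in> {0..<n}" for v
    unfolding \<rho>_def by (rule bij_betw_inv_into_left[OF \<pi> that])
  have inj_\<rho>: "inj_on \<rho> {0..<n}"
    using bij_betw_inv_into[OF \<pi>] unfolding \<rho>_def bij_betw_def by blast
  define c' where "c' w = (if w < n then c (\<rho> w) else None)" for w
  have "colored_iso n (E, c) (E', c')"
    unfolding colored_iso_def using \<pi> E' \<rho>\<pi> bij_betw_apply[OF \<pi>] by (auto simp: c'_def)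
  moreover have "partial_coloring n k c'"
    unfolding partial_coloring_def
  proof (intro conjI)
    show "dom c' \<subseteq> {0..<n}"
      by (auto simp: c'_def dom_def split: if_splits)
    show "inj_on c' (dom c')"
    proof (rule inj_onI)
      fix w1 w2 assume "w1 \<in> dom c'" "w2 \<in> dom c'" and "c' w1 = c' w2"
      then have "w1 < n" "w2 < n" "\<rho> w1 \<in> dom c" "\<rho> w2 \<in> dom c" "c (\<rho> w1) = c (\<rho> w2)"
        by (auto simp: c'_def dom_def split: if_splits)
      then show "w1 = w2"
        using c inj_\<rho> unfolding partial_coloring_def inj_on_def by auto
    qed
    have "ran c' = ran c"
    proof
      show "ran c' \<subseteq> ran c"
        by (auto simp: c'_def ran_def split: if_splits)
      show "ran c \<subseteq> ran c'"
      proof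
        fix j assume "j \<in> ran c"
        then obtain v where "c v = Some j" unfolding ran_def by blast
        moreover have "v < n" using partial_coloring_Some_less[OF c] \<open>c v = Some j\<close> .
        ultimately have "c' (\<pi> v) = Some j"
          using \<rho>\<pi> bij_betw_apply[OF \<pi>] by (auto simp: c'_def)
        then show "j \<in> ran c'" unfolding ran_def by blast
      qed
    qed
    then show "ran c' = {1..k}"
      using c unfolding partial_coloring_def by simp
  qed
  ultimately show ?thesis using that by blast
qed

lemma G_count_ge_1: "1 \<le> G_count t d n"
proof -
  have "(\<lambda>E. {E' \<in> labeled_class t d n. graph_iso n E E'}) ` labeled_class t d n \<noteq> {}"
    using empty_in_labeled_class by blast
  then show ?thesis
    unfolding G_count_def num_classes_def Setcompr_eq_image
    by (simp add: Suc_le_eq card_gt_0_iff finite_labeled_class)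
qed

lemma G'_count_le_G_count_mult:
  "G'_count t d n k \<le> G_count t d n * card {c. partial_coloring n k c}"
proof -
  let ?L = "labeled_class t d n" and ?A = "colored_class t d n k"
    and ?P = "{c. partial_coloring n k c}"
  let ?graph_class = "\<lambda>E. {E' \<in> ?L. graph_iso n E E'}"
    and ?colored_class = "\<lambda>G. {G' \<in> ?A. colored_iso n G G'}"
  define rep where "rep Y = (SOME E. E \<in> Y)" for Y :: "(nat \<times> nat) set set"
  have "?colored_class ` ?A \<subseteq> (\<lambda>(Y, c). ?colored_class (rep Y, c)) ` (?graph_class ` ?L \<times> ?P)"
  proof
    fix X assume "X \<in> ?colored_class ` ?A"
    then obtain E c where E: "E \<in> ?L" and c: "partial_coloring n k c"
      and X: "X = ?colored_class (E, c)"
      unfolding colored_class_def by blast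
    let ?Y = "?graph_class E"
    have "E \<in> ?Y" using E graph_iso_refl by blast
    then have "rep ?Y \<in> ?Y" unfolding rep_def by (rule someI)
    then obtain c' where c': "partial_coloring n k c'" and iso: "colored_iso n (E, c) (rep ?Y, c')"
      using colored_iso_of_graph_iso[OF c] by blast
    have "colored_iso n (rep ?Y, c') (E, c)"
      using colored_iso_sym labeled_class_subset[OF E] iso by simp
    then have "X = ?colored_class (rep ?Y, c')"
      unfolding X using iso colored_iso_trans by blast
    then show "X \<in> (\<lambda>(Y, c). ?colored_class (rep Y, c)) ` (?graph_class ` ?L \<times> ?P)"
      using E c' by blast
  qed
  then have "card (?colored_class ` ?A) \<le> card (?graph_class ` ?L \<times> ?P)"
    by (rule surj_card_le[rotated]) (simp add: finite_labeled_class finite_partial_colorings)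
  then show ?thesis
    unfolding G'_count_def G_count_def num_classes_def Setcompr_eq_image card_cartesian_product .
qed

lemma one_plus_ln_le_xlnx_diff:
  fixes x :: real
  assumes "1 \<le> x"
  shows "1 + ln x \<le> (x + 1) * ln (x + 1) - x * ln x"
proof -
  have "ln (x / (x + 1)) \<le> x / (x + 1) - 1"
    using assms by (intro ln_le_minus_one) auto
  then have "ln x - ln (x + 1) \<le> - 1 / (x + 1)"
    using assms by (simp add: ln_div field_simps)
  then have "1 \<le> (x + 1) * (ln (x + 1) - ln x)"
    using assms by (simp add: field_simps)
  then show ?thesis
    by (simp add: algebra_simps)
qed

lemma sum_ln_le:
  assumes "1 \<le> a" and "a \<le> n"
  shows "(\<Sum>j\<in>{a<..n}. ln (real j))
    \<le> (real n * ln n - real n + ln n) - (real a * ln a - real a + ln a)"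
  using assms(2)
proof (induction n rule: dec_induct)
  case base
  then show ?case by simp
next
  case (step n)
  have "{a<..Suc n} = insert (Suc n) {a<..n}"
    using step by auto
  moreover have "1 + ln (real n) \<le> (real n + 1) * ln (real n + 1) - real n * ln (real n)"
    using assms step by (intro one_plus_ln_le_xlnx_diff) auto
  ultimately show ?case
    using step.IH by (simp add: algebra_simps)
qed

lemma ln_prod_le:
  assumes "k \<le> n" and "1 \<le> n"
  shows "ln (real (\<Prod>{n - k + 1..n}))
    \<le> real n * ln n - (real n - real k) * ln (real n - real k) - real k + ln n + 1"
proof -
  have "ln (real (\<Prod>{n - k + 1..n})) = (\<Sum>j\<in>{n - k<..n}. ln (real j))"
    by (simp add: of_nat_prod atLeastSucAtMost_greaterThanAtMost) (rule ln_prod; simp)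
  also have "\<dots> \<le> real n * ln n - (real n - real k) * ln (real n - real k) - real k + ln n + 1"
  proof (cases "k < n")
    case True
    have "(\<Sum>j\<in>{n - k<..n}. ln (real j)) \<le> (real n * ln n - real n + ln n)
      - ((real n - real k) * ln (real n - real k) - (real n - real k) + ln (real n - real k))"
      using sum_ln_le[of "n - k" n] True by (simp add: of_nat_diff)
    moreover have "0 \<le> ln (real n - real k)"
      using True by simp
    ultimately show ?thesis
      by linarith
  next
    case False
    then have "k = n" using assms by simp
    moreover have "{0<..n} = insert 1 {1<..n}"
      using assms by auto
    ultimately show ?thesis
      using sum_ln_le[of 1 n] assms by simp
  qed
  finally show ?thesis .
qed

lemma log2_prod_le:
  assumes "k \<le> n" and "2 \<le> n"
  shows "log 2 (real (\<Prod>{n - k + 1..n}))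
    \<le> real n * log 2 (real n) - (real n - real k) * log 2 (real n - real k) - real k
       + 3 * log 2 (real n)"
proof -
  have "ln (1/2 :: real) \<le> 1/2 - 1"
    by (rule ln_le_minus_one) simp
  then have "1 \<le> 2 * ln (2::real)"
    by (simp add: ln_div)
  moreover have "ln 2 \<le> ln (real n)"
    using assms by simp
  moreover have "real k * ln 2 \<le> real k"
    using ln_2_less_1 by (simp add: mult_left_le)
  ultimately have "ln (real (\<Prod>{n - k + 1..n}))
    \<le> real n * ln n - (real n - real k) * ln (real n - real k) - real k * ln 2 + 3 * ln n"
    using ln_prod_le[of k n] assms by linarith
  then show ?thesis
    by (simp add: log_def field_simps)
qed

lemma log2_le_add_if_le_mult:
  fixes a b c :: nat
  assumes "a \<le> b * c" and "1 \<le> b" and "1 \<le> c"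
  shows "log 2 (real a) \<le> log 2 (real b) + log 2 (real c)"
proof (cases "a = 0")
  case True
  then show ?thesis
    using assms by (simp add: log_def)
next
  case False
  then have "log 2 (real a) \<le> log 2 (real b * real c)"
    using assms by (simp flip: of_nat_mult)
  also have "\<dots> = log 2 (real b) + log 2 (real c)"
    using assms by (simp add: log_mult)
  finally show ?thesis .
qed

theorem proposition1:
  fixes t d :: nat
  assumes "t \<ge> 1" and "d \<ge> 1"
  shows "\<exists>C::real. \<forall>n m :: nat. 1 \<le> m \<and> d * m \<le> n \<and> n \<ge> 2 \<longrightarrow>
     log 2 (real (G'_count t d n (d * m)))
       \<le> log 2 (real (G_count t d n)) + real n * log 2 (real n)
          - (real n - real (d * m)) * log 2 (real n - real (d * m))
          - real (d * m) + C * log 2 (real n)"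
proof (intro exI[of _ 3] allI impI)
  fix n m :: nat
  assume "1 \<le> m \<and> d * m \<le> n \<and> n \<ge> 2"
  then have k: "d * m \<le> n" and n: "2 \<le> n" by auto
  have "G'_count t d n (d * m) \<le> G_count t d n * \<Prod>{n - d * m + 1..n}"
    using G'_count_le_G_count_mult card_partial_colorings_le[OF k] mult_le_mono2 order_trans
    by blast
  then have "log 2 (real (G'_count t d n (d * m)))
    \<le> log 2 (real (G_count t d n)) + log 2 (real (\<Prod>{n - d * m + 1..n}))"
    using G_count_ge_1 by (rule log2_le_add_if_le_mult) (simp add: Suc_le_eq prod_pos)
  then show "log 2 (real (G'_count t d n (d * m)))
       \<le> log 2 (real (G_count t d n)) + real n * log 2 (real n)
          - (real n - real (d * m)) * log 2 (real n - real (d * m))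
          - real (d * m) + 3 * log 2 (real n)"
    using log2_prod_le[OF k n] by linarith
qed

end
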